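(* (a) For every real number $M>0$ there exist connected graphs $H$ and $G$ with $H$ a subgraph of $G$ such that $\frac{\textnormal{sdim}(H)}{\textnormal{sdim}(G)}>M$. (b) Let $G$ and $H$ be connected graphs. If $H_{\rm SR}$ is a subgraph of $G_{\rm SR}$, then $\textnormal{sdim}(H)\le \textnormal{sdim}(G)$.
   Context: All graphs are finite, simple and undirected; $d(x,y)$ is the shortest-path distance. A set $S\subseteq V(G)$ is a strong resolving set of a connected graph $G$ if for all distinct $x,y\in V(G)$ there exists $z\in S$ such that $x$ lies on a $y$–$z$ geodesic or $y$ lies on an $x$–$z$ geodesic; $\textnormal{sdim}(G)$ is the minimum cardinality of a strong resolving set. A vertex $u$ is maximally distant from $v$ if $d(u,v)\ge d(w,v)$ for every neighbor $w$ of $u$; $u$ and $v$ are mutually maximally distant (MMD) if each is maximally distant from the other. The strong resolving graph $G_{\rm SR}$ has vertex set $\{x\in V(G): x \text{ is MMD with some } y\in V(G)\}$, and $uv$ is an edge of $G_{\rm SR}$ iff $u$ and $v$ are MMD in $G$. *)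

theory Defs
  imports Complex_Main
begin

definition simple_graph :: "'a set \<Rightarrow> ('a \<Rightarrow> 'a \<Rightarrow> bool) \<Rightarrow> bool" where
  "simple_graph V E \<longleftrightarrow> finite V \<and>
     (\<forall>x y. E x y \<longrightarrow> x \<in> V \<and> y \<in> V \<and> x \<noteq> y \<and> E y x)"

text \<open>A walk from x to y: a nonempty vertex list with consecutive vertices adjacent;
  its length is the number of edges, i.e. length minus one.\<close>
definition walk :: "'a set \<Rightarrow> ('a \<Rightarrow> 'a \<Rightarrow> bool) \<Rightarrow> 'a list \<Rightarrow> 'a \<Rightarrow> 'a \<Rightarrow> bool" where
  "walk V E xs x y \<longleftrightarrow> xs \<noteq> [] \<and> set xs \<subseteq> V \<and> hd xs = x \<and> last xs = y \<and>
     (\<forall>i. Suc i < length xs \<longrightarrow> E (xs ! i) (xs ! Suc i))"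

definition connected_graph :: "'a set \<Rightarrow> ('a \<Rightarrow> 'a \<Rightarrow> bool) \<Rightarrow> bool" where
  "connected_graph V E \<longleftrightarrow> simple_graph V E \<and> V \<noteq> {} \<and>
     (\<forall>x\<in>V. \<forall>y\<in>V. \<exists>xs. walk V E xs x y)"

definition gdist :: "'a set \<Rightarrow> ('a \<Rightarrow> 'a \<Rightarrow> bool) \<Rightarrow> 'a \<Rightarrow> 'a \<Rightarrow> nat" where
  "gdist V E x y = (LEAST n. \<exists>xs. walk V E xs x y \<and> length xs = Suc n)"

definition on_geodesic :: "'a set \<Rightarrow> ('a \<Rightarrow> 'a \<Rightarrow> bool) \<Rightarrow> 'a \<Rightarrow> 'a \<Rightarrow> 'a \<Rightarrow> bool" where
  "on_geodesic V E x y z \<longleftrightarrow>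
     (\<exists>xs. walk V E xs y z \<and> length xs = Suc (gdist V E y z) \<and> x \<in> set xs)"

definition strong_resolving_set :: "'a set \<Rightarrow> ('a \<Rightarrow> 'a \<Rightarrow> bool) \<Rightarrow> 'a set \<Rightarrow> bool" where
  "strong_resolving_set V E S \<longleftrightarrow> S \<subseteq> V \<and>
     (\<forall>x\<in>V. \<forall>y\<in>V. x \<noteq> y \<longrightarrow>
        (\<exists>z\<in>S. on_geodesic V E x y z \<or> on_geodesic V E y x z))"

definition sdim :: "'a set \<Rightarrow> ('a \<Rightarrow> 'a \<Rightarrow> bool) \<Rightarrow> nat" where
  "sdim V E = Min {card S | S. strong_resolving_set V E S}"

definition maximally_distant :: "'a set \<Rightarrow> ('a \<Rightarrow> 'a \<Rightarrow> bool) \<Rightarrow> 'a \<Rightarrow> 'a \<Rightarrow> bool" where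
  "maximally_distant V E u v \<longleftrightarrow> u \<in> V \<and> v \<in> V \<and>
     (\<forall>w. E u w \<longrightarrow> gdist V E w v \<le> gdist V E u v)"

definition MMD :: "'a set \<Rightarrow> ('a \<Rightarrow> 'a \<Rightarrow> bool) \<Rightarrow> 'a \<Rightarrow> 'a \<Rightarrow> bool" where
  "MMD V E u v \<longleftrightarrow> maximally_distant V E u v \<and> maximally_distant V E v u"

definition SR_vertices :: "'a set \<Rightarrow> ('a \<Rightarrow> 'a \<Rightarrow> bool) \<Rightarrow> 'a set" where
  "SR_vertices V E = {x \<in> V. \<exists>y\<in>V. MMD V E x y}"

definition SR_edges :: "'a set \<Rightarrow> ('a \<Rightarrow> 'a \<Rightarrow> bool) \<Rightarrow> 'a \<Rightarrow> 'a \<Rightarrow> bool" where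
  "SR_edges V E u v \<longleftrightarrow> u \<noteq> v \<and> MMD V E u v"

text \<open>(V1,E1) is a subgraph of (V2,E2) (literally, same vertex names).\<close>
definition subgraph :: "'a set \<Rightarrow> ('a \<Rightarrow> 'a \<Rightarrow> bool) \<Rightarrow> 'a set \<Rightarrow> ('a \<Rightarrow> 'a \<Rightarrow> bool) \<Rightarrow> bool" where
  "subgraph V1 E1 V2 E2 \<longleftrightarrow> V1 \<subseteq> V2 \<and> (\<forall>x y. E1 x y \<longrightarrow> E2 x y)"

definition subgraph_iso :: "'a set \<Rightarrow> ('a \<Rightarrow> 'a \<Rightarrow> bool) \<Rightarrow> 'b set \<Rightarrow> ('b \<Rightarrow> 'b \<Rightarrow> bool) \<Rightarrow> bool" where
  "subgraph_iso V1 E1 V2 E2 \<longleftrightarrow> (\<exists>f. inj_on f V1 \<and> f ` V1 \<subseteq> V2 \<and>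
     (\<forall>x\<in>V1. \<forall>y\<in>V1. E1 x y \<longrightarrow> E2 (f x) (f y)))"

end

theory Submission
  imports Defs
begin

text \<open>
  A set S is strongly resolving iff it contains a vertex of every MMD pair, i.e. iff it is a
  vertex cover of the strong resolving graph. An MMD pair can only be resolved by one of its own
  vertices, since neither lies inside a geodesic starting at the other. Conversely, given
  x \<noteq> y, walk from x through y as far as possible, to a vertex u maximally distant from x, and
  then from u through x as far as possible, to v; then u and v are MMD, y lies on an x-u geodesic
  and x on a y-v geodesic, so whichever of u, v lies in S resolves x and y. Hence sdim is the
  vertex cover number of the strong resolving graph, which can only grow along embeddings: this
  is (b).

  For (a), the comb on 2n vertices (a path with a pendant tooth at each of its n vertices) is a
  spanning subgraph of the ladder with n rungs. The n teeth are pairwise MMD, so the comb needs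
  n - 1 of them in every strong resolving set. In the ladder every vertex off the first rung has
  a neighbour one rung lower, which is farther from every vertex on a rung at least as high; so
  every MMD pair meets the first rung, and the sdim of the ladder is at most 2.
\<close>

section \<open>Walks and distances\<close>

lemma walk_singleton: "walk V E [a] x y \<longleftrightarrow> a = x \<and> a = y \<and> a \<in> V"
  by (auto simp: walk_def)

lemma walk_Cons_Cons:
  "walk V E (a # b # xs) x y \<longleftrightarrow> a = x \<and> a \<in> V \<and> E a b \<and> walk V E (b # xs) b y"
proof -
  have "(\<forall>i. Suc i < length (a # b # xs) \<longrightarrow> E ((a # b # xs) ! i) ((a # b # xs) ! Suc i)) \<longleftrightarrow>
        E a b \<and> (\<forall>i. Suc i < length (b # xs) \<longrightarrow> E ((b # xs) ! i) ((b # xs) ! Suc i))"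
    by (auto simp: All_less_Suc2 less_Suc_eq_0_disj)
  then show ?thesis
    unfolding walk_def by auto
qed

lemma walk_nonempty: "walk V E xs x y \<Longrightarrow> xs \<noteq> []"
  by (simp add: walk_def)

lemma walk_endpoints: "walk V E xs x y \<Longrightarrow> x \<in> V \<and> y \<in> V"
  unfolding walk_def by (metis hd_in_set last_in_set subsetD)

lemma walk_append: "walk V E xs x y \<Longrightarrow> walk V E ys y z \<Longrightarrow> walk V E (xs @ tl ys) x z"
proof (induction xs arbitrary: x rule: induct_list012)
  case 1
  then show ?case by (simp add: walk_def)
next
  case (2 a)
  then have "a = x" "a = y" "ys = y # tl ys"
    by (auto simp: walk_def walk_singleton)
  then show ?case using "2.prems"(2) by simp
next
  case (3 a b xs)
  then have "walk V E ((b # xs) @ tl ys) b z"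
    by (simp add: walk_Cons_Cons)
  then show ?case using "3.prems"(1) by (auto simp: walk_Cons_Cons)
qed

lemma walk_rev:
  assumes "\<And>a b. E a b \<Longrightarrow> E b a"
  shows "walk V E xs x y \<Longrightarrow> walk V E (rev xs) y x"
proof (induction xs arbitrary: x rule: induct_list012)
  case 1
  then show ?case by (simp add: walk_def)
next
  case (2 a)
  then show ?case by (auto simp: walk_singleton)
next
  case (3 a b xs)
  then have ab: "a = x" "a \<in> V" "E a b" and w: "walk V E (b # xs) b y"
    by (auto simp: walk_Cons_Cons)
  have "walk V E (rev (b # xs)) y b" "walk V E [b, a] b a"
    using "3.IH"(2)[OF w] ab assms walk_endpoints[OF w]
    by (auto simp: walk_Cons_Cons walk_singleton)
  from walk_append[OF this] show ?case
    using ab by simp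
qed

lemma walk_split:
  "walk V E xs y z \<Longrightarrow> x \<in> set xs \<Longrightarrow>
    \<exists>p q. walk V E p y x \<and> walk V E q x z \<and> length p + length q = Suc (length xs)"
proof (induction xs arbitrary: y rule: induct_list012)
  case 1
  then show ?case by simp
next
  case (2 a)
  then show ?case
    by (intro exI[of _ "[a]"]) (auto simp: walk_singleton)
next
  case (3 a b xs)
  show ?case
  proof (cases "x = a")
    case True
    then show ?thesis using "3.prems"
      by (intro exI[of _ "[a]"] exI[of _ "a # b # xs"])
        (auto simp: walk_singleton walk_Cons_Cons)
  next
    case False
    moreover have "walk V E (b # xs) b z"
      using "3.prems"(1) by (simp add: walk_Cons_Cons)
    ultimately obtain p q where pq: "walk V E p b x" "walk V E q x z"
        "length p + length q = Suc (length (b # xs))"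
      using "3.IH"(2) "3.prems"(2) by fastforce
    then obtain p' where "p = b # p'"
      unfolding walk_def by (cases p) auto
    then have "walk V E (a # p) y x"
      using pq "3.prems"(1) by (auto simp: walk_Cons_Cons)
    then show ?thesis
      using pq by (intro exI[of _ "a # p"] exI[of _ q]) auto
  qed
qed

lemma gdist_le_walk_length: "walk V E xs x y \<Longrightarrow> gdist V E x y \<le> length xs - 1"
  unfolding gdist_def
  by (rule Least_le) (metis Suc_pred' length_greater_0_conv walk_nonempty)

lemma shortest_walk_exists:
  "walk V E xs x y \<Longrightarrow> \<exists>ys. walk V E ys x y \<and> length ys = Suc (gdist V E x y)"
  unfolding gdist_def
  by (rule LeastI_ex) (metis Suc_pred' length_greater_0_conv walk_nonempty)

context
  fixes V :: "'a set" and E :: "'a \<Rightarrow> 'a \<Rightarrow> bool"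
  assumes conn: "connected_graph V E"
begin

lemma edge_sym: "E a b \<Longrightarrow> E b a"
  using conn by (auto simp: connected_graph_def simple_graph_def)

lemma edge_in_V: "E a b \<Longrightarrow> a \<in> V \<and> b \<in> V \<and> a \<noteq> b"
  using conn by (auto simp: connected_graph_def simple_graph_def)

lemma finite_V: "finite V"
  using conn by (auto simp: connected_graph_def simple_graph_def)

lemma shortest_walk:
  "x \<in> V \<Longrightarrow> y \<in> V \<Longrightarrow> \<exists>xs. walk V E xs x y \<and> length xs = Suc (gdist V E x y)"
  using conn shortest_walk_exists unfolding connected_graph_def by metis

lemma gdist_sym:
  assumes "x \<in> V" "y \<in> V"
  shows "gdist V E x y = gdist V E y x"
proof -
  have le: "gdist V E a b \<le> gdist V E b a" if ab: "a \<in> V" "b \<in> V" for a b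
  proof -
    obtain xs where "walk V E xs b a" "length xs = Suc (gdist V E b a)"
      using shortest_walk ab by blast
    then show ?thesis
      using gdist_le_walk_length[OF walk_rev[OF edge_sym]] by fastforce
  qed
  show ?thesis
    using le assms by (meson antisym)
qed

lemma gdist_triangle:
  "x \<in> V \<Longrightarrow> y \<in> V \<Longrightarrow> z \<in> V \<Longrightarrow> gdist V E x z \<le> gdist V E x y + gdist V E y z"
proof -
  assume "x \<in> V" "y \<in> V" "z \<in> V"
  then obtain p q where "walk V E p x y" "length p = Suc (gdist V E x y)"
      "walk V E q y z" "length q = Suc (gdist V E y z)"
    using shortest_walk by meson
  with gdist_le_walk_length[OF walk_append] show ?thesis
    by fastforce
qed

lemma gdist_self: "x \<in> V \<Longrightarrow> gdist V E x x = 0"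
  unfolding gdist_def by (rule Least_eq_0) (auto simp: walk_singleton intro: exI[of _ "[x]"])

lemma gdist_eq_0_iff: "x \<in> V \<Longrightarrow> y \<in> V \<Longrightarrow> gdist V E x y = 0 \<longleftrightarrow> x = y"
proof
  assume "x \<in> V" "y \<in> V" "gdist V E x y = 0"
  then obtain xs where "walk V E xs x y" "length xs = 1"
    using shortest_walk by fastforce
  then show "x = y"
    by (cases xs) (auto simp: walk_singleton)
qed (simp add: gdist_self)

lemma gdist_le_1_if_edge: "E a b \<Longrightarrow> gdist V E a b \<le> 1"
  using gdist_le_walk_length[of V E "[a, b]" a b] edge_in_V
  by (auto simp: walk_Cons_Cons walk_singleton)

lemma closer_neighbour_exists:
  assumes "x \<in> V" "y \<in> V" "x \<noteq> y"
  shows "\<exists>w. E x w \<and> gdist V E w y + 1 = gdist V E x y"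
proof -
  obtain xs where xs: "walk V E xs x y" "length xs = Suc (gdist V E x y)"
    using shortest_walk assms by blast
  then obtain w ws where "xs = x # w # ws"
    using assms by (cases xs; cases "tl xs") (auto simp: walk_def)
  with xs have w: "E x w" "walk V E (w # ws) w y" "length ws = gdist V E x y - 1"
    by (auto simp: walk_Cons_Cons)
  have "gdist V E x y \<le> gdist V E x w + gdist V E w y"
    using gdist_triangle assms edge_in_V[OF w(1)] by blast
  moreover have "gdist V E x y \<noteq> 0"
    using gdist_eq_0_iff assms by blast
  ultimately show ?thesis
    using gdist_le_walk_length[OF w(2)] gdist_le_1_if_edge[OF w(1)] w
    by (intro exI[of _ w]) auto
qed

lemma on_geodesic_iff:
  assumes "x \<in> V" "y \<in> V" "z \<in> V"
  shows "on_geodesic V E x y z \<longleftrightarrow> gdist V E y z = gdist V E y x + gdist V E x z"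
proof
  assume "on_geodesic V E x y z"
  then obtain xs where xs: "walk V E xs y z" "length xs = Suc (gdist V E y z)" "x \<in> set xs"
    unfolding on_geodesic_def by blast
  then obtain p q where pq: "walk V E p y x" "walk V E q x z"
      "length p + length q = Suc (length xs)"
    using walk_split by metis
  have "0 < length p" "0 < length q"
    using pq walk_nonempty by (metis length_greater_0_conv)+
  then show "gdist V E y z = gdist V E y x + gdist V E x z"
    using gdist_le_walk_length[OF pq(1)] gdist_le_walk_length[OF pq(2)] pq(3) xs(2)
      gdist_triangle[OF assms(2,1,3)]
    by linarith
next
  assume d: "gdist V E y z = gdist V E y x + gdist V E x z"
  obtain p q where "walk V E p y x" "length p = Suc (gdist V E y x)"
      "walk V E q x z" "length q = Suc (gdist V E x z)"
    using shortest_walk assms by meson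
  moreover have "x \<in> set p"
    using \<open>walk V E p y x\<close> unfolding walk_def by auto
  ultimately show "on_geodesic V E x y z"
    unfolding on_geodesic_def using walk_append d by (intro exI[of _ "p @ tl q"]) auto
qed

section \<open>Strong resolving sets and mutually maximally distant pairs\<close>

lemma maximally_distant_geodesic_end:
  assumes md: "maximally_distant V E u v" and z: "z \<in> V"
    and geo: "gdist V E v z = gdist V E v u + gdist V E u z"
  shows "z = u"
proof (rule ccontr)
  assume "z \<noteq> u"
  have uv: "u \<in> V" "v \<in> V"
    using md by (auto simp: maximally_distant_def)
  obtain w where w: "E u w" "gdist V E w z + 1 = gdist V E u z"
    using closer_neighbour_exists[OF uv(1) z] \<open>z \<noteq> u\<close> by metis
  have wV: "w \<in> V"
    using edge_in_V[OF w(1)] by blast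
  have "gdist V E v z \<le> gdist V E v w + gdist V E w z"
    using gdist_triangle uv wV z by blast
  moreover have "gdist V E w v \<le> gdist V E u v"
    using md w(1) by (auto simp: maximally_distant_def)
  moreover have "gdist V E w v = gdist V E v w" "gdist V E u v = gdist V E v u"
    using gdist_sym uv wV by auto
  ultimately show False
    using geo w(2) by linarith
qed

lemma strong_resolving_set_meets_MMD:
  assumes S: "strong_resolving_set V E S" and "u \<noteq> v" and mmd: "MMD V E u v"
  shows "u \<in> S \<or> v \<in> S"
proof -
  have uv: "u \<in> V" "v \<in> V"
    using mmd by (auto simp: MMD_def maximally_distant_def)
  then obtain z where z: "z \<in> S" "on_geodesic V E u v z \<or> on_geodesic V E v u z"
    using S \<open>u \<noteq> v\<close> unfolding strong_resolving_set_def by blast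
  have "z \<in> V"
    using z(1) S by (auto simp: strong_resolving_set_def)
  with z(2) have "z = u \<or> z = v"
    using maximally_distant_geodesic_end mmd on_geodesic_iff uv by (auto simp: MMD_def)
  then show ?thesis
    using z(1) by blast
qed

lemma maximally_distant_beyond:
  assumes x: "x \<in> V" and y: "y \<in> V"
  obtains u where "gdist V E x u = gdist V E x y + gdist V E y u" "maximally_distant V E u x"
proof -
  let ?d = "gdist V E"
  let ?beyond = "\<lambda>u. u \<in> V \<and> ?d x u = ?d x y + ?d y u"
  obtain b where "\<forall>u\<in>V. ?d x u < b"
    using finite_nat_set_iff_bounded[of "?d x ` V"] finite_V by auto
  moreover have "?beyond y"
    using y gdist_self by simp
  ultimately obtain u where u: "?beyond u"
    and u_max: "\<And>u'. ?beyond u' \<Longrightarrow> ?d x u' \<le> ?d x u"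
    using ex_has_greatest_nat[of ?beyond y "?d x" b] by blast
  have "maximally_distant V E u x"
    unfolding maximally_distant_def
  proof (intro conjI allI impI)
    fix w
    assume "E u w"
    then have w: "w \<in> V" "?d u w \<le> 1"
      using edge_in_V gdist_le_1_if_edge by blast+
    show "?d w x \<le> ?d u x"
    proof (rule ccontr)
      assume "\<not> ?d w x \<le> ?d u x"
      moreover have "?d w x = ?d x w" "?d u x = ?d x u"
        using gdist_sym u w x by auto
      ultimately have "?d x u < ?d x w"
        by linarith
      moreover have "?d x w \<le> ?d x u + ?d u w" "?d y w \<le> ?d y u + ?d u w"
        "?d x w \<le> ?d x y + ?d y w"
        using gdist_triangle u w x y by blast+
      ultimately have "?beyond w"
        using u w by linarith
      then show False
        using u_max \<open>?d x u < ?d x w\<close> by fastforce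
    qed
  qed (use u x in auto)
  then show thesis
    using that u by blast
qed

lemma maximally_distant_extend:
  assumes md: "maximally_distant V E u x" and v: "v \<in> V"
    and geo: "gdist V E u v = gdist V E u x + gdist V E x v"
  shows "maximally_distant V E u v"
  unfolding maximally_distant_def
proof (intro conjI allI impI)
  have ux: "u \<in> V" "x \<in> V"
    using md by (auto simp: maximally_distant_def)
  fix w
  assume "E u w"
  then have "w \<in> V" "gdist V E w x \<le> gdist V E u x"
    using edge_in_V md by (auto simp: maximally_distant_def)
  moreover have "gdist V E w v \<le> gdist V E w x + gdist V E x v"
    using gdist_triangle \<open>w \<in> V\<close> ux v by blast
  ultimately show "gdist V E w v \<le> gdist V E u v"
    using geo by linarith
qed (use md v in \<open>auto simp: maximally_distant_def\<close>)

lemma strong_resolving_set_if_meets_MMD: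
  assumes "S \<subseteq> V" and meets: "\<And>u v. u \<noteq> v \<Longrightarrow> MMD V E u v \<Longrightarrow> u \<in> S \<or> v \<in> S"
  shows "strong_resolving_set V E S"
  unfolding strong_resolving_set_def
proof (intro conjI ballI impI \<open>S \<subseteq> V\<close>)
  let ?d = "gdist V E"
  fix x y
  assume x: "x \<in> V" and y: "y \<in> V" and "x \<noteq> y"
  obtain u where u: "?d x u = ?d x y + ?d y u" and md_ux: "maximally_distant V E u x"
    using maximally_distant_beyond x y by blast
  have uV: "u \<in> V"
    using md_ux by (simp add: maximally_distant_def)
  obtain v where v: "?d u v = ?d u x + ?d x v" and md_vu: "maximally_distant V E v u"
    using maximally_distant_beyond uV x by blast
  have vV: "v \<in> V"
    using md_vu by (simp add: maximally_distant_def)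
  have "MMD V E u v"
    using maximally_distant_extend md_ux md_vu v vV by (simp add: MMD_def)
  moreover have "u \<noteq> v"
  proof
    assume "u = v"
    then have "?d u x = 0"
      using v gdist_self uV by simp
    then have "u = x"
      using gdist_eq_0_iff uV x by blast
    then have "?d x y = 0"
      using u gdist_self x by simp
    then show False
      using gdist_eq_0_iff x y \<open>x \<noteq> y\<close> by blast
  qed
  ultimately have "u \<in> S \<or> v \<in> S"
    using meets by blast
  moreover have "on_geodesic V E y x u"
    using on_geodesic_iff u x y uV by blast
  moreover have "on_geodesic V E x y v"
  proof -
    have "?d u v \<le> ?d u y + ?d y v" "?d y v \<le> ?d y x + ?d x v"
      using gdist_triangle x y uV vV by blast+
    moreover have "?d u x = ?d x u" "?d u y = ?d y u" "?d y x = ?d x y"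
      using gdist_sym x y uV by auto
    ultimately show ?thesis
      using on_geodesic_iff x y vV u v by simp
  qed
  ultimately show "\<exists>z\<in>S. on_geodesic V E x y z \<or> on_geodesic V E y x z"
    by blast
qed

lemma finite_strong_resolving_set: "strong_resolving_set V E S \<Longrightarrow> finite S"
  using finite_V finite_subset by (auto simp: strong_resolving_set_def)

lemma finite_strong_resolving_cards: "finite {card S | S. strong_resolving_set V E S}"
  by (rule finite_subset[of _ "card ` Pow V"]) (auto simp: strong_resolving_set_def finite_V)

lemma sdim_le_card: "strong_resolving_set V E S \<Longrightarrow> sdim V E \<le> card S"
  unfolding sdim_def using finite_strong_resolving_cards by (auto intro: Min_le)

lemma sdim_attained:
  obtains S where "strong_resolving_set V E S" "card S = sdim V E"
proof -
  have "strong_resolving_set V E V"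
    by (rule strong_resolving_set_if_meets_MMD) (auto simp: MMD_def maximally_distant_def)
  then have "sdim V E \<in> {card S | S. strong_resolving_set V E S}"
    unfolding sdim_def using finite_strong_resolving_cards by (intro Min_in) auto
  then show thesis
    using that by auto
qed

lemma sdim_pos:
  assumes "x \<in> V" "y \<in> V" "x \<noteq> y"
  shows "0 < sdim V E"
proof -
  obtain S where S: "strong_resolving_set V E S" "card S = sdim V E"
    using sdim_attained by blast
  then have "S \<noteq> {}"
    using assms unfolding strong_resolving_set_def by blast
  moreover have "finite S"
    using finite_strong_resolving_set S(1) .
  ultimately show ?thesis
    using S(2) card_gt_0_iff by metis
qed

lemma card_pairwise_MMD_le_sdim:
  assumes "\<And>u v. u \<in> L \<Longrightarrow> v \<in> L \<Longrightarrow> u \<noteq> v \<Longrightarrow> MMD V E u v"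
  shows "card L \<le> sdim V E + 1"
proof -
  obtain S where S: "strong_resolving_set V E S" "card S = sdim V E"
    using sdim_attained by blast
  have "card (L - S) \<le> 1"
  proof (cases "finite (L - S)")
    case True
    then show ?thesis
      using strong_resolving_set_meets_MMD[OF S(1)] assms by (auto simp: card_le_Suc0_iff_eq)
  qed simp
  moreover have "card (L \<inter> S) \<le> card S"
    using finite_strong_resolving_set[OF S(1)] by (simp add: card_mono)
  moreover have "card L \<le> card (L \<inter> S) + card (L - S)"
    using card_Un_le[of "L \<inter> S" "L - S"] by (simp add: Int_Diff_Un)
  ultimately show ?thesis
    using S(2) by linarith
qed

lemma pendant_maximally_distant:
  assumes "u \<in> V" "v \<in> V" "u \<noteq> v" and pendant: "\<And>w. E u w \<Longrightarrow> w = p"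
  shows "maximally_distant V E u v"
proof -
  obtain w where "E u w" "gdist V E w v + 1 = gdist V E u v"
    using closer_neighbour_exists assms by metis
  then show ?thesis
    using assms unfolding maximally_distant_def by (metis le_add1)
qed

end

lemma sdim_le_if_SR_subgraph_iso:
  assumes conn_G: "connected_graph VG EG" and conn_H: "connected_graph VH EH"
    and iso: "subgraph_iso (SR_vertices VH EH) (SR_edges VH EH)
                           (SR_vertices VG EG) (SR_edges VG EG)"
  shows "sdim VH EH \<le> sdim VG EG"
proof -
  obtain S where S: "strong_resolving_set VG EG S" "card S = sdim VG EG"
    using sdim_attained[OF conn_G] by blast
  obtain f where inj: "inj_on f (SR_vertices VH EH)"
    and hom: "\<And>x y. x \<in> SR_vertices VH EH \<Longrightarrow> y \<in> SR_vertices VH EH \<Longrightarrow>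
        SR_edges VH EH x y \<Longrightarrow> SR_edges VG EG (f x) (f y)"
    using iso unfolding subgraph_iso_def by (elim exE conjE) (rule that, assumption, blast)
  define T where "T = {x \<in> SR_vertices VH EH. f x \<in> S}"
  have "strong_resolving_set VH EH T"
  proof (rule strong_resolving_set_if_meets_MMD[OF conn_H])
    show "T \<subseteq> VH"
      by (auto simp: T_def SR_vertices_def)
  next
    fix u v
    assume uv: "u \<noteq> v" "MMD VH EH u v"
    then have "MMD VH EH v u" "u \<in> VH" "v \<in> VH"
      by (auto simp: MMD_def maximally_distant_def)
    then have SR: "u \<in> SR_vertices VH EH" "v \<in> SR_vertices VH EH"
      using uv(2) unfolding SR_vertices_def by blast+
    then have "SR_edges VG EG (f u) (f v)"
      using hom uv by (simp add: SR_edges_def)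
    then have "f u \<in> S \<or> f v \<in> S"
      using strong_resolving_set_meets_MMD[OF conn_G S(1)] by (simp add: SR_edges_def)
    then show "u \<in> T \<or> v \<in> T"
      using SR by (auto simp: T_def)
  qed
  then have "sdim VH EH \<le> card T"
    by (rule sdim_le_card[OF conn_H])
  also have "card T \<le> card S"
  proof (rule card_inj_on_le)
    show "inj_on f T"
      using inj by (rule inj_on_subset) (simp add: T_def)
    show "f ` T \<subseteq> S" "finite S"
      using finite_strong_resolving_set[OF conn_G S(1)] by (auto simp: T_def)
  qed
  finally show ?thesis
    using S(2) by simp
qed

section \<open>Distances from potentials\<close>

lemma walk_down_potential:
  fixes g :: "'a \<Rightarrow> nat"
  assumes y: "y \<in> V" "g y = 0"
    and step: "\<And>x. x \<in> V \<Longrightarrow> x \<noteq> y \<Longrightarrow> \<exists>w\<in>V. E x w \<and> g w + 1 = g x"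
  shows "x \<in> V \<Longrightarrow> \<exists>xs. walk V E xs x y \<and> length xs = Suc (g x)"
proof (induction "g x" arbitrary: x)
  case 0
  have "x = y"
  proof (rule ccontr)
    assume "x \<noteq> y"
    then obtain w where "g w + 1 = g x"
      using step 0 by blast
    then show False
      using "0.hyps" by simp
  qed
  then show ?case
    using 0 y by (intro exI[of _ "[x]"]) (auto simp: walk_singleton)
next
  case (Suc k)
  then obtain w where w: "w \<in> V" "E x w" "g w + 1 = g x"
    using step y(2) by force
  then obtain xs where xs: "walk V E xs w y" "length xs = Suc (g w)"
    using Suc by force
  moreover obtain ws where "xs = w # ws"
    using xs(1) by (cases xs) (auto simp: walk_def)
  ultimately have "walk V E (x # xs) x y"
    using w Suc.prems by (simp add: walk_Cons_Cons)
  then show ?case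
    using xs w by (intro exI[of _ "x # xs"]) auto
qed

lemma potential_le_walk_length:
  fixes g :: "'a \<Rightarrow> nat"
  assumes lip: "\<And>a b. E a b \<Longrightarrow> g a \<le> g b + 1"
  shows "walk V E xs x y \<Longrightarrow> g x \<le> g y + (length xs - 1)"
proof (induction xs arbitrary: x rule: induct_list012)
  case (3 a b xs)
  then have "a = x" "E a b" "walk V E (b # xs) b y"
    by (auto simp: walk_Cons_Cons)
  then show ?case
    using "3.IH"(2) lip[of a b] by fastforce
qed (auto simp: walk_def)

lemma gdist_eq_potential:
  fixes g :: "'a \<Rightarrow> nat"
  assumes y: "y \<in> V" "g y = 0"
    and step: "\<And>x. x \<in> V \<Longrightarrow> x \<noteq> y \<Longrightarrow> \<exists>w\<in>V. E x w \<and> g w + 1 = g x"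
    and lip: "\<And>a b. E a b \<Longrightarrow> g a \<le> g b + 1"
    and x: "x \<in> V"
  shows "gdist V E x y = g x"
proof -
  obtain xs where xs: "walk V E xs x y" "length xs = Suc (g x)"
    using walk_down_potential[OF y step x] by blast
  then have "gdist V E x y \<le> g x"
    using gdist_le_walk_length[OF xs(1)] by simp
  moreover obtain ys where ys: "walk V E ys x y" "length ys = Suc (gdist V E x y)"
    using shortest_walk_exists[OF xs(1)] by blast
  then have "g x \<le> gdist V E x y"
    using potential_le_walk_length[where g = g, OF lip ys(1)] y(2) by simp
  ultimately show ?thesis
    by simp
qed

lemma connected_graph_if_potential:
  fixes g :: "'a \<Rightarrow> nat"
  assumes "simple_graph V E" and r: "r \<in> V" "g r = 0"
    and step: "\<And>x. x \<in> V \<Longrightarrow> x \<noteq> r \<Longrightarrow> \<exists>w\<in>V. E x w \<and> g w + 1 = g x"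
  shows "connected_graph V E"
  unfolding connected_graph_def
proof (intro conjI ballI)
  fix x y
  assume "x \<in> V" "y \<in> V"
  then obtain p q where p: "walk V E p x r" and q: "walk V E q y r"
    using walk_down_potential[OF r step] by meson
  have "\<And>a b. E a b \<Longrightarrow> E b a"
    using \<open>simple_graph V E\<close> by (simp add: simple_graph_def)
  from walk_append[OF p walk_rev[OF this q]] show "\<exists>xs. walk V E xs x y"
    by blast
qed (use assms in auto)

section \<open>Ladders and combs\<close>

text \<open>Vertices i and n + i (for i < n) form the i-th rung of the ladder; the comb keeps the rail
  0, ..., n - 1 and all rungs, which become its teeth.\<close>

definition ladder :: "nat \<Rightarrow> nat \<Rightarrow> nat \<Rightarrow> bool" where
  "ladder n x y \<longleftrightarrow> x < 2*n \<and> y < 2*n \<and>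
     (x + n = y \<or> y + n = x \<or> (x + 1 = y \<or> y + 1 = x) \<and> (x < n \<longleftrightarrow> y < n))"

definition comb :: "nat \<Rightarrow> nat \<Rightarrow> nat \<Rightarrow> bool" where
  "comb n x y \<longleftrightarrow> x < 2*n \<and> y < 2*n \<and>
     (x + n = y \<or> y + n = x \<or> (x + 1 = y \<or> y + 1 = x) \<and> x < n \<and> y < n)"

definition rung :: "nat \<Rightarrow> nat \<Rightarrow> nat" where
  "rung n x = (if x < n then x else x - n)"

text \<open>On nat, (a - b) + (b - a) is the absolute difference of a and b.\<close>

definition ladder_dist :: "nat \<Rightarrow> nat \<Rightarrow> nat \<Rightarrow> nat" where
  "ladder_dist n x y =
     (rung n x - rung n y) + (rung n y - rung n x) + (if x < n \<longleftrightarrow> y < n then 0 else 1)"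

lemma comb_imp_ladder: "comb n x y \<Longrightarrow> ladder n x y"
  unfolding comb_def ladder_def by auto

lemma simple_graph_ladder: "simple_graph {..<2*n} (ladder n)"
  unfolding simple_graph_def ladder_def by auto

lemma simple_graph_comb: "simple_graph {..<2*n} (comb n)"
  unfolding simple_graph_def comb_def by auto

lemma ladder_iff_rung:
  "ladder n a b \<longleftrightarrow> a < 2*n \<and> b < 2*n \<and> a \<noteq> b \<and>
     (rung n a = rung n b \<or>
      (a < n \<longleftrightarrow> b < n) \<and> (rung n a + 1 = rung n b \<or> rung n b + 1 = rung n a))"
  unfolding ladder_def rung_def by auto

lemma rung_less: "x < 2*n \<Longrightarrow> rung n x < n"
  unfolding rung_def by auto

lemma rung_eq_0_iff: "rung n x = 0 \<longleftrightarrow> x = 0 \<or> x = n"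
  unfolding rung_def by auto

lemma rung_inj:
  "x < 2*n \<Longrightarrow> y < 2*n \<Longrightarrow> rung n x = rung n y \<Longrightarrow> (x < n \<longleftrightarrow> y < n) \<Longrightarrow> x = y"
  unfolding rung_def by (auto split: if_splits)

lemma rung_Suc:
  "x < 2*n \<Longrightarrow> rung n x + 1 < n \<Longrightarrow>
    x + 1 < 2*n \<and> rung n (x + 1) = rung n x + 1 \<and> (x + 1 < n \<longleftrightarrow> x < n)"
  unfolding rung_def by (auto split: if_splits)

lemma rung_pred: "0 < rung n x \<Longrightarrow> rung n (x - 1) = rung n x - 1 \<and> (x - 1 < n \<longleftrightarrow> x < n)"
  unfolding rung_def by (auto split: if_splits)

lemma ladder_dist_self: "ladder_dist n x x = 0"
  by (simp add: ladder_dist_def)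

lemma ladder_dist_edge: "ladder n a b \<Longrightarrow> ladder_dist n a y \<le> ladder_dist n b y + 1"
  unfolding ladder_iff_rung ladder_dist_def
  by (cases "a < n \<longleftrightarrow> y < n"; cases "b < n \<longleftrightarrow> y < n") auto

lemma ladder_dist_step:
  assumes x: "x < 2*n" and y: "y < 2*n" and "x \<noteq> y"
  shows "\<exists>w\<in>{..<2*n}. ladder n x w \<and> ladder_dist n w y + 1 = ladder_dist n x y"
proof -
  consider "rung n x < rung n y" | "rung n y < rung n x" | "rung n x = rung n y"
    by linarith
  then show ?thesis
  proof cases
    case 1
    then have "rung n x + 1 < n"
      using rung_less[OF y] by linarith
    then show ?thesis
      using rung_Suc[OF x] 1 x
      by (intro bexI[of _ "x + 1"]) (auto simp: ladder_iff_rung ladder_dist_def)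
  next
    case 2
    then show ?thesis
      using rung_pred[of n x] x
      by (intro bexI[of _ "x - 1"]) (auto simp: ladder_iff_rung ladder_dist_def)
  next
    case 3
    then show ?thesis
      using rung_inj[OF x y] x y \<open>x \<noteq> y\<close>
      by (intro bexI[of _ y]) (auto simp: ladder_iff_rung ladder_dist_def)
  qed
qed

lemma ladder_dist_step_down:
  "x < 2*n \<Longrightarrow> 0 < rung n x \<Longrightarrow> rung n x \<le> rung n y \<Longrightarrow>
    ladder n x (x - 1) \<and> ladder_dist n (x - 1) y = ladder_dist n x y + 1"
  using rung_pred[of n x] by (auto simp: ladder_iff_rung ladder_dist_def)

lemma connected_ladder: "0 < n \<Longrightarrow> connected_graph {..<2*n} (ladder n)"
  by (rule connected_graph_if_potential[OF simple_graph_ladder,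
        where r = 0 and g = "\<lambda>x. ladder_dist n x 0"])
    (use ladder_dist_step ladder_dist_self in auto)

lemma gdist_ladder:
  "0 < n \<Longrightarrow> x < 2*n \<Longrightarrow> y < 2*n \<Longrightarrow> gdist {..<2*n} (ladder n) x y = ladder_dist n x y"
  by (rule gdist_eq_potential[of y _ "\<lambda>x. ladder_dist n x y"])
    (use ladder_dist_step ladder_dist_self ladder_dist_edge in auto)

lemma ladder_not_maximally_distant:
  assumes n: "0 < n" and "0 < rung n u" "rung n u \<le> rung n v"
  shows "\<not> maximally_distant {..<2*n} (ladder n) u v"
proof
  assume md: "maximally_distant {..<2*n} (ladder n) u v"
  then have uv: "u < 2*n" "v < 2*n"
    by (auto simp: maximally_distant_def)
  then have "ladder n u (u - 1)" "ladder_dist n (u - 1) v = ladder_dist n u v + 1"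
    using ladder_dist_step_down assms by blast+
  moreover have "u - 1 < 2*n"
    using uv by simp
  ultimately show False
    using md gdist_ladder[OF n] uv by (auto simp: maximally_distant_def)
qed

lemma sdim_ladder_le: "0 < n \<Longrightarrow> sdim {..<2*n} (ladder n) \<le> 2"
proof -
  assume n: "0 < n"
  have "strong_resolving_set {..<2*n} (ladder n) {0, n}"
  proof (rule strong_resolving_set_if_meets_MMD[OF connected_ladder[OF n]])
    fix u v
    assume "MMD {..<2*n} (ladder n) u v"
    then have "\<not> (0 < rung n u \<and> rung n u \<le> rung n v)"
      "\<not> (0 < rung n v \<and> rung n v \<le> rung n u)"
      using ladder_not_maximally_distant[OF n] by (auto simp: MMD_def)
    then have "rung n u = 0 \<or> rung n v = 0"
      by linarith
    then show "u \<in> {0, n} \<or> v \<in> {0, n}"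
      by (auto simp: rung_eq_0_iff)
  qed (use n in auto)
  moreover have "card {0, n} \<le> 2"
    by (cases "n = 0") auto
  ultimately show ?thesis
    using sdim_le_card[OF connected_ladder[OF n]] by fastforce
qed

text \<open>Distances to vertex 0 are the same in the comb as in the ladder.\<close>

lemma connected_comb: "0 < n \<Longrightarrow> connected_graph {..<2*n} (comb n)"
proof (rule connected_graph_if_potential[OF simple_graph_comb,
      where r = 0 and g = "\<lambda>x. ladder_dist n x 0"])
  fix x
  assume "x \<in> {..<2*n}" "x \<noteq> 0"
  then show "\<exists>w\<in>{..<2*n}. comb n x w \<and> ladder_dist n w 0 + 1 = ladder_dist n x 0"
    by (intro bexI[of _ "if x < n then x - 1 else x - n"])
      (auto simp: comb_def ladder_dist_def rung_def)
qed (auto simp: ladder_dist_self)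

lemma comb_tooth_pendant: "n \<le> x \<Longrightarrow> comb n x w \<Longrightarrow> w = x - n"
  unfolding comb_def by auto

lemma sdim_comb_ge: "0 < n \<Longrightarrow> n \<le> sdim {..<2*n} (comb n) + 1"
proof -
  assume n: "0 < n"
  have "MMD {..<2*n} (comb n) u v" if "u \<in> {n..<2*n}" "v \<in> {n..<2*n}" "u \<noteq> v" for u v
    using that comb_tooth_pendant pendant_maximally_distant[OF connected_comb[OF n], of u v "u - n"]
      pendant_maximally_distant[OF connected_comb[OF n], of v u "v - n"]
    by (auto simp: MMD_def)
  from card_pairwise_MMD_le_sdim[OF connected_comb[OF n], where L = "{n..<2*n}", OF this]
  show ?thesis
    by simp
qed

theorem mainTheorem1:
  shows "(\<forall>M::real. M > 0 \<longrightarrow>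
            (\<exists>(VH::nat set) EH VG EG.
               connected_graph VH EH \<and> connected_graph VG EG \<and> subgraph VH EH VG EG \<and>
               real (sdim VH EH) / real (sdim VG EG) > M))
       \<and> (\<forall>(VG::'a set) EG (VH::'b set) EH.
            connected_graph VG EG \<longrightarrow> connected_graph VH EH \<longrightarrow>
            subgraph_iso (SR_vertices VH EH) (SR_edges VH EH)
                         (SR_vertices VG EG) (SR_edges VG EG) \<longrightarrow>
            sdim VH EH \<le> sdim VG EG)"
proof (intro conjI allI impI)
  fix M :: real
  assume "M > 0"
  obtain n :: nat where n: "2 * M + 1 < n"
    using reals_Archimedean2 by blast
  then have "0 < n"
    using \<open>M > 0\<close> by simp
  let ?sH = "sdim {..<2*n} (comb n)" and ?sG = "sdim {..<2*n} (ladder n)"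
  have "n \<le> ?sH + 1" "0 < ?sG" "?sG \<le> 2"
    using sdim_comb_ge sdim_ladder_le sdim_pos[OF connected_ladder, of n 0 n] \<open>0 < n\<close> by auto
  then have "real n \<le> real ?sH + 1" "0 < real ?sG" "real ?sG \<le> 2"
    by (metis of_nat_1 of_nat_add of_nat_le_iff, simp_all)
  moreover have "M * real ?sG \<le> M * 2"
    using calculation \<open>M > 0\<close> by (intro mult_left_mono) auto
  ultimately have "M < real ?sH / real ?sG"
    using n by (simp add: less_divide_eq)
  moreover have "subgraph {..<2*n} (comb n) {..<2*n} (ladder n)"
    by (simp add: subgraph_def comb_imp_ladder)
  ultimately show "\<exists>(VH::nat set) EH VG EG. connected_graph VH EH \<and> connected_graph VG EG \<and>
      subgraph VH EH VG EG \<and> real (sdim VH EH) / real (sdim VG EG) > M"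
    using connected_comb connected_ladder \<open>0 < n\<close> by blast
qed (rule sdim_le_if_SR_subgraph_iso)

end
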